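(* Let $\alpha>0$, $A\ge0$, $B>0$, $t>0$, and let $P_n(x,t)=x^n+\mathsf{p}_1(n,t)x^{n-1}+\cdots$ be the monic polynomials orthogonal on $[0,\infty)$ w.r.t. $w(x,t)=x^\alpha e^{-x}(A+B\theta(x-t))$, with norms $h_n(t)$. Let $D_n(t)=\prod_{j=0}^{n-1}h_j(t)=\det\left(\int_0^\infty x^{i+j}w(x,t)dx\right)_{i,j=0}^{n-1}$ and $R_n(t)=Bt^\alpha e^{-t}\{P_n(t,t)\}^2/h_n(t)$. Then for $n\ge1$ $$-t\frac{d}{dt}\ln D_n(t)=-t\sum_{j=0}^{n-1}\frac{d}{dt}\ln h_j(t)=t\sum_{j=0}^{n-1}R_j(t)=-\mathsf{p}_1(n,t)-n(n+\alpha).$$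
   Context: $\theta$ is the Heaviside function ($1$ for $x>0$, $0$ otherwise); $P_n(t,t)$ is $P_n(x,t)$ at $x=t$. *)

theory Defs
  imports "HOL-Analysis.Analysis" "HOL-Computational_Algebra.Polynomial"
begin

definition heaviside :: "real \<Rightarrow> real" where
  "heaviside x = (if x > 0 then 1 else 0)"

definition wt :: "real \<Rightarrow> real \<Rightarrow> real \<Rightarrow> real \<Rightarrow> real \<Rightarrow> real" where
  "wt \<alpha> A B t x = x powr \<alpha> * exp (- x) * (A + B * heaviside (x - t))"

definition OP :: "real \<Rightarrow> real \<Rightarrow> real \<Rightarrow> real \<Rightarrow> nat \<Rightarrow> real poly" where
  "OP \<alpha> A B t n = (THE p. degree p = n \<and> lead_coeff p = 1 \<and>
      (\<forall>k<n. (LINT x:{0..}|lborel. x ^ k * poly p x * wt \<alpha> A B t x) = 0))"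

definition p1 :: "real \<Rightarrow> real \<Rightarrow> real \<Rightarrow> real \<Rightarrow> nat \<Rightarrow> real" where
  "p1 \<alpha> A B t n = coeff (OP \<alpha> A B t n) (n - 1)"

definition hn :: "real \<Rightarrow> real \<Rightarrow> real \<Rightarrow> real \<Rightarrow> nat \<Rightarrow> real" where
  "hn \<alpha> A B t n = (LINT x:{0..}|lborel. (poly (OP \<alpha> A B t n) x)\<^sup>2 * wt \<alpha> A B t x)"

definition Dn :: "real \<Rightarrow> real \<Rightarrow> real \<Rightarrow> real \<Rightarrow> nat \<Rightarrow> real" where
  "Dn \<alpha> A B t n = (\<Prod>j<n. hn \<alpha> A B t j)"

definition Rn :: "real \<Rightarrow> real \<Rightarrow> real \<Rightarrow> real \<Rightarrow> nat \<Rightarrow> real" where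
  "Rn \<alpha> A B t n = B * t powr \<alpha> * exp (- t) * (poly (OP \<alpha> A B t n) t)\<^sup>2 / hn \<alpha> A B t n"

end

theory Submission
  imports Defs
begin

text \<open>
  Everything is expressed through the moments \<open>\<mu>\<^sub>k(t) = \<integral> x^k w(x,t) dx\<close> over \<open>[0,\<infinity>)\<close>.
  Differentiating in \<open>t\<close> only sees the jump of the weight at \<open>x = t\<close>, so
  \<open>\<mu>\<^sub>k' = -B t^(k+\<alpha>) e^(-t)\<close>, and integrating \<open>(x^(k+\<alpha>+1) e^(-x))'\<close> against the step
  gives \<open>\<mu>\<^sub>k\<^sub>+\<^sub>1 = (k+\<alpha>+1) \<mu>\<^sub>k + B t^(\<alpha>+1) e^(-t) t^k\<close>.
  As \<open>P\<^sub>n\<close> minimises \<open>\<integral> p\<^sup>2 w\<close> among monic polynomials of degree \<open>n\<close>, the variation of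
  its coefficients does not contribute to \<open>h\<^sub>n'\<close>; hence \<open>h\<^sub>n' = -B t^\<alpha> e^(-t) P\<^sub>n(t,t)\<^sup>2\<close>,
  i.e. \<open>(ln h\<^sub>n)' = -R\<^sub>n\<close>. The moment recurrence applied to
  \<open>(\<alpha>+1) P\<^sub>j\<^sup>2 + x (P\<^sub>j\<^sup>2)' - x P\<^sub>j\<^sup>2\<close> gives \<open>\<integral> x P\<^sub>j\<^sup>2 w / h\<^sub>j = 2j + \<alpha> + 1 + t R\<^sub>j\<close>,
  and these diagonal recurrence coefficients sum over \<open>j < n\<close> to \<open>-p\<^sub>1(n,t)\<close>.
\<close>

section \<open>Moment functionals and their monic orthogonal polynomials\<close>

definition moment_functional :: "(nat \<Rightarrow> 'a::comm_semiring_1) \<Rightarrow> 'a poly \<Rightarrow> 'a" where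
  "moment_functional m p = (\<Sum>i\<le>degree p. coeff p i * m i)"

lemma moment_functional_altdef:
  assumes "degree p \<le> N"
  shows "moment_functional m p = (\<Sum>i\<le>N. coeff p i * m i)"
  unfolding moment_functional_def
  using assms by (intro sum.mono_neutral_left) (auto simp: coeff_eq_0)

lemma moment_functional_add:
  "moment_functional m (p + q) = moment_functional m p + moment_functional m q"
proof -
  define N where "N = max (degree p) (degree q)"
  have "degree (p + q) \<le> N" "degree p \<le> N" "degree q \<le> N"
    by (auto simp: N_def degree_add_le)
  then show ?thesis by (simp add: moment_functional_altdef sum.distrib distrib_right)
qed

lemma moment_functional_smult: "moment_functional m (smult c p) = c * moment_functional m p"
  using degree_smult_le[of c p]
  by (simp add: moment_functional_altdef[of _ "degree p"] sum_distrib_left mult.assoc)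

lemma moment_functional_0 [simp]: "moment_functional m 0 = 0"
  by (simp add: moment_functional_def)

lemma moment_functional_monom: "moment_functional m (monom c k) = c * m k"
proof -
  have "(\<Sum>i\<le>k. coeff (monom c k) i * m i) = (\<Sum>i\<le>k. if i = k then c * m k else 0)"
    by (intro sum.cong) (auto simp: coeff_monom)
  then show ?thesis by (simp add: moment_functional_altdef[OF degree_monom_le])
qed

lemma moment_functional_diff:
  "moment_functional m (p - q) = moment_functional m p - (moment_functional m q :: 'a::comm_ring_1)"
  using moment_functional_add[of m "p - q" q] by simp

lemma moment_functional_sum:
  "moment_functional m (\<Sum>i\<in>I. f i) = (\<Sum>i\<in>I. moment_functional m (f i))"
  by (induction I rule: infinite_finite_induct) (auto simp: moment_functional_add)

lemma moment_functional_pCons_0: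
  "moment_functional m (pCons 0 p) = moment_functional (\<lambda>k. m (Suc k)) p"
proof -
  have deg: "degree (pCons 0 p) \<le> Suc (degree p)"
    by (simp add: degree_pCons_le)
  show ?thesis
    unfolding moment_functional_altdef[OF deg] sum.atMost_Suc_shift
    by (simp add: moment_functional_def)
qed

lemmas moment_functional_linear =
  moment_functional_add moment_functional_diff moment_functional_smult moment_functional_sum

text \<open>
  For the weight \<open>x^(a-1) e^(-x)\<close> one has \<open>(a q + x q' - x q) w = (x q w)'\<close>; the
  recurrence is the integrated form of this, \<open>b t^k\<close> being a boundary term at \<open>t\<close>.
\<close>
lemma moment_functional_Pearson:
  fixes m :: "nat \<Rightarrow> 'a::idom"
  assumes rec: "\<And>k. m (Suc k) = (of_nat k + a) * m k + b * t ^ k"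
  shows "moment_functional m (smult a q + pCons 0 (pderiv q) - pCons 0 q) = - b * poly q t"
proof -
  define F where
    "F q = moment_functional m (smult a q + pCons 0 (pderiv q) - pCons 0 q) + b * poly q t" for q
  have F_add: "F (p + q) = F p + F q" for p q
    by (simp add: F_def pderiv_add smult_add_right moment_functional_pCons_0
        moment_functional_linear algebra_simps)
  have F_monom: "F (monom c k) = 0" for c k
  proof -
    have "pCons 0 (pderiv (monom c k)) = monom (c * of_nat k) k"
      by (rule poly_eqI) (auto simp: coeff_pderiv coeff_pCons split: nat.split)
    then show ?thesis
      by (simp add: F_def smult_monom moment_functional_linear moment_functional_pCons_0
          moment_functional_monom rec poly_monom algebra_simps)
  qed
  have F_0: "F 0 = 0"
    by (simp add: F_def)
  have "F (\<Sum>i\<in>I. monom (coeff q i) i) = 0" if "finite I" for I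
    using that by (induction I rule: finite_induct) (simp_all add: F_0 F_add F_monom)
  from this[of "{..degree q}"] show ?thesis
    by (simp add: F_def poly_as_sum_of_monoms eq_neg_iff_add_eq_0)
qed

fun orth_poly :: "(nat \<Rightarrow> 'a::field) \<Rightarrow> nat \<Rightarrow> 'a poly" where
  "orth_poly m 0 = 1"
| "orth_poly m (Suc n) = monom 1 (Suc n) -
     (\<Sum>j\<le>n. smult (moment_functional m (monom 1 (Suc n) * orth_poly m j)
        / moment_functional m (orth_poly m j * orth_poly m j)) (orth_poly m j))"

declare orth_poly.simps(2) [simp del]

lemma orth_poly_monic: "coeff (orth_poly m n) n = 1 \<and> (\<forall>k>n. coeff (orth_poly m n) k = 0)"
proof (induction n rule: less_induct)
  case (less n)
  show ?case
  proof (cases n)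
    case (Suc n')
    have "coeff (orth_poly m j) k = 0" if "j \<le> n'" "k > n'" for j k
      using less[of j] that Suc by auto
    then show ?thesis
      unfolding Suc orth_poly.simps(2) by (auto simp: coeff_sum)
  qed simp
qed

lemma coeff_orth_poly_self [simp]: "coeff (orth_poly m n) n = 1"
  using orth_poly_monic by blast

lemma coeff_orth_poly_eq_0: "n < k \<Longrightarrow> coeff (orth_poly m n) k = 0"
  using orth_poly_monic by blast

lemma degree_orth_poly [simp]: "degree (orth_poly m n) = n"
  by (intro antisym degree_le le_degree) (auto simp: coeff_orth_poly_eq_0)

lemma orth_poly_nonzero [simp]: "orth_poly m n \<noteq> 0"
  using coeff_orth_poly_self[of m n] by (metis coeff_0 zero_neq_one)

lemma moment_functional_orthogonal_lower:
  assumes orth: "\<And>k. k < n \<Longrightarrow> moment_functional m (monom 1 k * p) = 0"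
    and lower: "\<And>k. n \<le> k \<Longrightarrow> coeff r k = 0"
  shows "moment_functional m (r * p) = (0 :: 'a::comm_ring_1)"
proof -
  have r_eq: "r = (\<Sum>k<n. monom (coeff r k) k)"
    by (rule poly_eqI) (auto simp: coeff_sum lower not_less)
  have "r * p = (\<Sum>k<n. monom (coeff r k) k * p)"
    by (subst r_eq) (simp add: sum_distrib_right)
  also have "\<dots> = (\<Sum>k<n. smult (coeff r k) (monom 1 k * p))"
    by (intro sum.cong refl) (metis mult.right_neutral smult_monom mult_smult_left)
  finally show ?thesis
    by (simp add: moment_functional_sum moment_functional_smult orth)
qed

lemma coeff_orth_poly_diff_eq_0:
  assumes "degree p = n" "lead_coeff p = 1" "n \<le> k"
  shows "coeff (p - orth_poly m n) k = 0"
  using assms by (cases "k = n") (auto simp: coeff_eq_0 coeff_orth_poly_eq_0)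

locale pos_def_moments =
  fixes m :: "nat \<Rightarrow> 'a::linordered_field"
  assumes moment_functional_square_pos: "p \<noteq> 0 \<Longrightarrow> moment_functional m (p * p) > 0"
begin

lemma moment_functional_square_nonneg: "moment_functional m (p * p) \<ge> 0"
  by (cases "p = 0") (auto dest: moment_functional_square_pos)

lemma orth_poly_orthogonal_pairwise:
  "j < n \<Longrightarrow> moment_functional m (orth_poly m j * orth_poly m n) = 0"
proof (induction n arbitrary: j rule: less_induct)
  case (less n)
  then obtain n' where n: "n = Suc n'" "j \<le> n'"
    by (cases n) auto
  let ?P = "orth_poly m"
  let ?c = "\<lambda>i. moment_functional m (monom 1 n * ?P i) / moment_functional m (?P i * ?P i)"
  have "moment_functional m (?P j * ?P i) = 0" if "i \<le> n'" "i \<noteq> j" for i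
    using less.IH[of i j] less.IH[of j i] that n by (cases "i < j") (auto simp: mult.commute)
  then have "(\<Sum>i\<le>n'. ?c i * moment_functional m (?P j * ?P i))
      = ?c j * moment_functional m (?P j * ?P j)"
    using n by (simp add: sum.remove[of "{..n'}" j])
  also have "\<dots> = moment_functional m (monom 1 n * ?P j)"
    using moment_functional_square_pos[of "?P j"] by simp
  finally show ?case
    unfolding n(1) orth_poly.simps(2)
    by (simp add: right_diff_distrib sum_distrib_left mult_smult_right moment_functional_linear
        mult.commute)
qed

lemma orth_poly_orthogonal:
  assumes "\<And>k. n \<le> k \<Longrightarrow> coeff r k = 0"
  shows "moment_functional m (r * orth_poly m n) = 0"
proof -
  have "moment_functional m (r * orth_poly m n) = 0"
    if "\<And>k. b \<le> k \<Longrightarrow> coeff r k = 0" "b \<le> n" for b r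
    using that
  proof (induction b arbitrary: r)
    case 0
    then have "r = 0" by (intro poly_eqI) simp
    then show ?case by simp
  next
    case (Suc b)
    define r' where "r' = r - smult (coeff r b) (orth_poly m b)"
    have "coeff r' k = 0" if "b \<le> k" for k
      using that Suc.prems(1)[of k] by (cases "k = b") (auto simp: r'_def coeff_orth_poly_eq_0)
    then have "moment_functional m (r' * orth_poly m n) = 0"
      using Suc by simp
    moreover have "r * orth_poly m n
        = r' * orth_poly m n + smult (coeff r b) (orth_poly m b * orth_poly m n)"
      by (simp add: r'_def algebra_simps)
    ultimately show ?case
      using orth_poly_orthogonal_pairwise[of b n] Suc.prems(2)
      by (simp add: distrib_right moment_functional_add moment_functional_smult)
  qed
  then show ?thesis using assms by blast
qed

lemma orth_poly_unique:
  assumes "degree p = n" "lead_coeff p = 1"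
    and orth: "\<And>k. k < n \<Longrightarrow> moment_functional m (monom 1 k * p) = 0"
  shows "p = orth_poly m n"
proof (rule ccontr)
  assume "p \<noteq> orth_poly m n"
  define r where "r = p - orth_poly m n"
  have lower: "\<And>k. n \<le> k \<Longrightarrow> coeff r k = 0"
    unfolding r_def using assms(1,2) by (rule coeff_orth_poly_diff_eq_0)
  have "moment_functional m (r * r)
      = moment_functional m (r * p) - moment_functional m (r * orth_poly m n)"
    by (simp add: r_def right_diff_distrib moment_functional_diff)
  also have "\<dots> = 0"
    using moment_functional_orthogonal_lower[OF orth lower] orth_poly_orthogonal[OF lower] by simp
  finally show False
    using moment_functional_square_pos[of r] \<open>p \<noteq> orth_poly m n\<close> by (simp add: r_def)
qed

lemma orth_poly_norm_minimal:
  assumes "degree p = n" "lead_coeff p = 1"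
  shows "moment_functional m (orth_poly m n * orth_poly m n) \<le> moment_functional m (p * p)"
proof -
  define r where "r = p - orth_poly m n"
  have lower: "\<And>k. n \<le> k \<Longrightarrow> coeff r k = 0"
    unfolding r_def using assms by (rule coeff_orth_poly_diff_eq_0)
  have expand: "p * p
      = orth_poly m n * orth_poly m n + (r * orth_poly m n + r * orth_poly m n) + r * r"
    by (simp add: r_def algebra_simps)
  have "moment_functional m (r * orth_poly m n) = 0"
    using lower by (rule orth_poly_orthogonal)
  then show ?thesis
    unfolding expand moment_functional_add using moment_functional_square_nonneg[of r] by simp
qed

lemma moment_functional_xderiv_square:
  "moment_functional m (pCons 0 (pderiv (orth_poly m j * orth_poly m j)))
     = 2 * of_nat j * moment_functional m (orth_poly m j * orth_poly m j)"
proof -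
  let ?P = "orth_poly m j"
  let ?D = "pCons 0 (pderiv ?P)"
  have "coeff (?D - smult (of_nat j) ?P) k = 0" if "j \<le> k" for k
    using that by (cases k) (auto simp: coeff_pderiv coeff_orth_poly_eq_0 le_less)
  then have "moment_functional m ((?D - smult (of_nat j) ?P) * ?P) = 0"
    by (rule orth_poly_orthogonal)
  then have DP: "moment_functional m (?D * ?P) = of_nat j * moment_functional m (?P * ?P)"
    by (simp add: left_diff_distrib moment_functional_diff moment_functional_smult)
  have xderiv: "pCons 0 (pderiv (?P * ?P)) = ?D * ?P + ?D * ?P"
    by (simp add: pderiv_mult algebra_simps)
  show ?thesis
    unfolding xderiv moment_functional_add DP by (simp add: algebra_simps)
qed

lemma coeff_orth_poly_Suc:
  "coeff (orth_poly m (Suc j)) j = coeff (pCons 0 (orth_poly m j)) j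
     - moment_functional m (pCons 0 (orth_poly m j * orth_poly m j))
       / moment_functional m (orth_poly m j * orth_poly m j)"
proof -
  let ?P = "orth_poly m"
  define r where "r = pCons 0 (?P j) - ?P (Suc j)"
  define r' where "r' = r - smult (coeff r j) (?P j)"
  have "coeff r' k = 0" if jk: "j \<le> k" for k
  proof -
    consider "k = j" | "k = Suc j" | "Suc j < k"
      using jk by (cases "k = j"; cases "k = Suc j") auto
    then show ?thesis
      by cases (auto simp: r'_def r_def coeff_orth_poly_eq_0 coeff_pCons split: nat.split)
  qed
  then have "moment_functional m (r' * ?P j) = 0"
    by (rule orth_poly_orthogonal)
  then have "moment_functional m (r * ?P j) = coeff r j * moment_functional m (?P j * ?P j)"
    by (simp add: r'_def left_diff_distrib moment_functional_diff moment_functional_smult)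
  moreover have "r * ?P j = pCons 0 (?P j * ?P j) - ?P j * ?P (Suc j)"
    by (simp add: r_def algebra_simps)
  then have "moment_functional m (r * ?P j)
      = moment_functional m (pCons 0 (?P j * ?P j)) - moment_functional m (?P j * ?P (Suc j))"
    by (simp only: moment_functional_diff)
  moreover have "moment_functional m (?P j * ?P (Suc j)) = 0"
    by (rule orth_poly_orthogonal_pairwise) simp
  ultimately have "coeff r j
      = moment_functional m (pCons 0 (?P j * ?P j)) / moment_functional m (?P j * ?P j)"
    using moment_functional_square_pos[of "?P j"] by (simp add: field_simps)
  then show ?thesis by (simp add: r_def)
qed

lemma orth_poly_kernel_diagonal:
  assumes rec: "\<And>k. m (Suc k) = (of_nat k + a) * m k + b * t ^ k"
  shows "b * (\<Sum>j\<le>n. poly (orth_poly m j) t ^ 2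
      / moment_functional m (orth_poly m j * orth_poly m j))
    = - coeff (orth_poly m (Suc n)) n - of_nat (Suc n) * (of_nat n + a)"
proof -
  let ?P = "orth_poly m"
  let ?h = "\<lambda>j. moment_functional m (?P j * ?P j)"
  define r where "r j = moment_functional m (pCons 0 (?P j * ?P j)) / ?h j" for j
  have step: "b * (poly (?P j) t ^ 2 / ?h j) = r j - a - 2 * of_nat j" for j
  proof -
    let ?q = "?P j * ?P j"
    have "a * ?h j + 2 * of_nat j * ?h j - moment_functional m (pCons 0 ?q)
        = moment_functional m (smult a ?q + pCons 0 (pderiv ?q) - pCons 0 ?q)"
      by (simp only: moment_functional_add moment_functional_diff moment_functional_smult
          moment_functional_xderiv_square)
    also have "\<dots> = - b * poly (?P j) t ^ 2"
      by (simp add: moment_functional_Pearson[OF rec] power2_eq_square)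
    finally show ?thesis
      using moment_functional_square_pos[of "?P j"] by (simp add: r_def field_simps)
  qed
  have coeff_Suc: "coeff (?P (Suc j)) j = coeff (pCons 0 (?P j)) j - r j" for j
    unfolding r_def by (rule coeff_orth_poly_Suc)
  show ?thesis
  proof (induction n)
    case 0
    show ?case
      using step[of 0] coeff_Suc[of 0] by simp
  next
    case (Suc n)
    have "b * (\<Sum>j\<le>Suc n. poly (?P j) t ^ 2 / ?h j)
        = b * (\<Sum>j\<le>n. poly (?P j) t ^ 2 / ?h j) + b * (poly (?P (Suc n)) t ^ 2 / ?h (Suc n))"
      by (simp add: distrib_left)
    also have "\<dots> = - coeff (?P (Suc n)) n - of_nat (Suc n) * (of_nat n + a)
        + (r (Suc n) - a - 2 * of_nat (Suc n))"
      by (simp only: Suc step)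
    also have "\<dots> = - coeff (?P (Suc (Suc n))) (Suc n) - of_nat (Suc (Suc n)) * (of_nat (Suc n) + a)"
      by (simp add: coeff_Suc[of "Suc n"] algebra_simps)
    finally show ?case .
  qed
qed

end

section \<open>Dependence of the orthogonal polynomials on a parameter\<close>

definition coeffwise_differentiable :: "(real \<Rightarrow> real poly) \<Rightarrow> real \<Rightarrow> bool" where
  "coeffwise_differentiable p t \<longleftrightarrow> (\<forall>k. (\<lambda>s. coeff (p s) k) differentiable (at t))"

lemma coeffwise_differentiable_const: "coeffwise_differentiable (\<lambda>s. q) t"
  by (simp add: coeffwise_differentiable_def)

lemma coeffwise_differentiable_diff:
  "coeffwise_differentiable p t \<Longrightarrow> coeffwise_differentiable q t
    \<Longrightarrow> coeffwise_differentiable (\<lambda>s. p s - q s) t"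
  by (simp add: coeffwise_differentiable_def)

lemma coeffwise_differentiable_mult:
  "coeffwise_differentiable p t \<Longrightarrow> coeffwise_differentiable q t
    \<Longrightarrow> coeffwise_differentiable (\<lambda>s. p s * q s) t"
  unfolding coeffwise_differentiable_def coeff_mult
  by (auto intro!: differentiable_sum differentiable_mult)

lemma coeffwise_differentiable_smult:
  "f differentiable (at t) \<Longrightarrow> coeffwise_differentiable p t
    \<Longrightarrow> coeffwise_differentiable (\<lambda>s. smult (f s) (p s)) t"
  unfolding coeffwise_differentiable_def by (auto intro!: differentiable_mult)

lemma coeffwise_differentiable_sum:
  "(\<And>j. j \<in> I \<Longrightarrow> coeffwise_differentiable (p j) t)
    \<Longrightarrow> coeffwise_differentiable (\<lambda>s. \<Sum>j\<in>I. p j s) t"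
  unfolding coeffwise_differentiable_def coeff_sum
  by (cases "finite I") (auto intro!: differentiable_sum)

lemma moment_functional_differentiable:
  assumes "\<And>k. (\<lambda>s. m s k) differentiable (at t)" "coeffwise_differentiable p t"
    and "\<And>s. degree (p s) \<le> N"
  shows "(\<lambda>s. moment_functional (m s) (p s)) differentiable (at t)"
  using assms unfolding moment_functional_altdef[OF assms(3)] coeffwise_differentiable_def
  by (auto intro!: differentiable_sum differentiable_mult)

lemma orth_poly_coeffwise_differentiable:
  assumes m: "\<And>k. (\<lambda>s. m s k) differentiable (at t)" and "pos_def_moments (m t)"
  shows "coeffwise_differentiable (\<lambda>s. orth_poly (m s) n) t"
proof (induction n rule: less_induct)
  case (less n)
  show ?case
  proof (cases n)
    case 0
    then show ?thesis by (simp add: coeffwise_differentiable_const)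
  next
    case (Suc n')
    have deg: "degree (monom 1 n * orth_poly (m s) j) \<le> n + j"
      "degree (orth_poly (m s) j * orth_poly (m s) j) \<le> j + j" for s j
      using degree_mult_le[of "monom 1 n" "orth_poly (m s) j"] degree_monom_le[of "1::real" n]
        degree_mult_le[of "orth_poly (m s) j" "orth_poly (m s) j"] by auto
    have "(\<lambda>s. moment_functional (m s) (monom 1 n * orth_poly (m s) j)
        / moment_functional (m s) (orth_poly (m s) j * orth_poly (m s) j)) differentiable (at t)"
      if "j \<le> n'" for j
      using that Suc less
        pos_def_moments.moment_functional_square_pos[OF assms(2), of "orth_poly (m t) j"]
      by (intro differentiable_divide moment_functional_differentiable[OF m _ deg(1)]
          moment_functional_differentiable[OF m _ deg(2)] coeffwise_differentiable_mult
          coeffwise_differentiable_const) auto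
    then show ?thesis
      unfolding Suc orth_poly.simps(2) using less Suc
      by (intro coeffwise_differentiable_diff coeffwise_differentiable_const
          coeffwise_differentiable_sum coeffwise_differentiable_smult) auto
  qed
qed

lemma moment_functional_power: "moment_functional (\<lambda>k. c * t ^ k) p = c * poly p t"
  by (simp add: moment_functional_def poly_altdef sum_distrib_left algebra_simps)

lemma orth_poly_norm_has_derivative:
  fixes m :: "real \<Rightarrow> nat \<Rightarrow> real"
  assumes m': "\<And>k. ((\<lambda>s. m s k) has_real_derivative m' k) (at t)"
    and pos: "pos_def_moments (m t)"
  shows "((\<lambda>s. moment_functional (m s) (orth_poly (m s) n * orth_poly (m s) n))
      has_real_derivative moment_functional m' (orth_poly (m t) n * orth_poly (m t) n)) (at t)"
proof -
  define c where "c k s = coeff (orth_poly (m s) n * orth_poly (m s) n) k" for k s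
  have deg: "degree (orth_poly (m s) n * orth_poly (m s) n) \<le> 2 * n" for s
    using degree_mult_le[of "orth_poly (m s) n" "orth_poly (m s) n"] by simp
  have "coeffwise_differentiable (\<lambda>s. orth_poly (m s) n * orth_poly (m s) n) t"
    using m' pos
    by (intro coeffwise_differentiable_mult orth_poly_coeffwise_differentiable)
      (auto simp: real_differentiable_def)
  then have c': "(c k has_real_derivative deriv (c k) t) (at t)" for k
    by (simp add: coeffwise_differentiable_def c_def[abs_def] DERIV_deriv_iff_real_differentiable)
  define \<phi> where "\<phi> s = moment_functional (m t) (orth_poly (m s) n * orth_poly (m s) n)" for s
  have \<phi>_eq: "\<phi> s = (\<Sum>k\<le>2 * n. c k s * m t k)" for s
    unfolding \<phi>_def c_def by (rule moment_functional_altdef[OF deg])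
  have "\<phi> t \<le> \<phi> s" for s
    unfolding \<phi>_def by (intro pos_def_moments.orth_poly_norm_minimal[OF pos]) simp_all
  moreover have "(\<phi> has_real_derivative (\<Sum>k\<le>2 * n. deriv (c k) t * m t k)) (at t)"
    unfolding \<phi>_eq[abs_def] by (auto intro!: derivative_eq_intros c')
  ultimately have crit: "(\<Sum>k\<le>2 * n. deriv (c k) t * m t k) = 0"
    by (intro DERIV_local_min[of \<phi> _ t 1]) auto
  have "((\<lambda>s. \<Sum>k\<le>2 * n. c k s * m s k) has_real_derivative
      (\<Sum>k\<le>2 * n. deriv (c k) t * m t k + c k t * m' k)) (at t)"
    by (auto intro!: derivative_eq_intros c' m' simp: mult.commute)
  moreover have "(\<Sum>k\<le>2 * n. deriv (c k) t * m t k + c k t * m' k)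
      = moment_functional m' (orth_poly (m t) n * orth_poly (m t) n)"
    unfolding sum.distrib crit c_def by (simp add: moment_functional_altdef[OF deg])
  moreover have "moment_functional (m s) (orth_poly (m s) n * orth_poly (m s) n)
      = (\<Sum>k\<le>2 * n. c k s * m s k)" for s
    unfolding c_def by (rule moment_functional_altdef[OF deg])
  ultimately show ?thesis
    by simp
qed

section \<open>The Laguerre weight with a jump\<close>

lemma set_integral_pos_on_interval:
  fixes f :: "real \<Rightarrow> real"
  assumes int: "set_integrable lborel S f" and nonneg: "\<And>x. x \<in> S \<Longrightarrow> 0 \<le> f x"
    and "a < b" "{a<..<b} \<subseteq> S" "finite F" and pos: "\<And>x. x \<in> {a<..<b} - F \<Longrightarrow> 0 < f x"
  shows "(LINT x:S|lborel. f x) > 0"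
proof (rule ccontr)
  assume "\<not> (LINT x:S|lborel. f x) > 0"
  moreover have "(LINT x:S|lborel. f x) \<ge> 0"
    using nonneg unfolding set_lebesgue_integral_def
    by (intro Bochner_Integration.integral_nonneg) (simp add: indicator_def)
  ultimately have "(LINT x:S|lborel. f x) = 0"
    by simp
  then have "AE x in lborel. indicator S x *\<^sub>R f x = 0"
    using integral_nonneg_eq_0_iff_AE[of lborel "\<lambda>x. indicator S x *\<^sub>R f x"] int nonneg
    by (simp add: set_integrable_def set_lebesgue_integral_def indicator_def)
  then have "AE x in lborel. x \<notin> {a<..<b} - F"
    by eventually_elim (use pos \<open>{a<..<b} \<subseteq> S\<close> in force)
  moreover have "{a<..<b} - F \<in> sets borel"
    using \<open>finite F\<close>
    by (metis borel_closed borel_open finite_imp_closed open_greaterThanLessThan sets.Diff)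
  ultimately have "{a<..<b} - F \<in> null_sets lborel"
    by (subst AE_iff_null_sets) auto
  moreover have "F \<in> null_sets lborel"
    using \<open>finite F\<close> by (rule finite_imp_null_set_lborel)
  ultimately have "{a<..<b} \<in> null_sets lborel"
    by (rule null_sets_subset[OF null_sets.Un]) auto
  then have "emeasure lborel {a<..<b} = 0"
    by auto
  then show False
    using \<open>a < b\<close> by simp
qed

locale laguerre_jump =
  fixes \<alpha> A B :: real
  assumes alpha_pos: "\<alpha> > 0" and A_nonneg: "A \<ge> 0" and B_pos: "B > 0"
begin

definition laguerre_weight :: "nat \<Rightarrow> real \<Rightarrow> real" where
  "laguerre_weight k x = x ^ k * x powr \<alpha> * exp (- x)"

lemma laguerre_weight_nonneg: "x \<ge> 0 \<Longrightarrow> laguerre_weight k x \<ge> 0"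
  by (simp add: laguerre_weight_def)

lemma laguerre_weight_measurable [measurable]: "laguerre_weight k \<in> borel_measurable borel"
  unfolding laguerre_weight_def by measurable

lemma laguerre_weight_continuous_on: "continuous_on {0..} (laguerre_weight k)"
  unfolding laguerre_weight_def using alpha_pos
  by (intro continuous_intros continuous_on_powr') auto

lemma laguerre_weight_has_integral:
  "(laguerre_weight k has_integral Gamma (real k + \<alpha> + 1)) {0..}"
proof -
  have "((\<lambda>x. x powr (real k + \<alpha> + 1 - 1) / exp x) has_integral Gamma (real k + \<alpha> + 1)) {0..}"
    by (rule Gamma_integral_real) (use alpha_pos in auto)
  moreover have "x powr (real k + \<alpha> + 1 - 1) / exp x = laguerre_weight k x" if "x \<in> {0..}" for x
    using that alpha_pos
    by (cases "x = 0") (auto simp: laguerre_weight_def powr_add powr_realpow exp_minus field_simps)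
  ultimately show ?thesis
    by (rule has_integral_eq[rotated]) auto
qed

lemma laguerre_weight_set_integrable: "set_integrable lborel {0..} (laguerre_weight k)"
proof -
  have "laguerre_weight k absolutely_integrable_on {0..}"
    using laguerre_weight_has_integral laguerre_weight_nonneg
    by (subst absolutely_integrable_on_iff_nonneg) auto
  then show ?thesis
    unfolding set_integrable_def by (subst (asm) integrable_completion) auto
qed

lemma set_integral_laguerre_weight:
  "(LINT x:{0..}|lborel. laguerre_weight k x) = Gamma (real k + \<alpha> + 1)"
  using set_borel_integral_eq_integral(2)[OF laguerre_weight_set_integrable]
    laguerre_weight_has_integral by (simp add: integral_unique)

lemma wt_nonneg: "x \<ge> 0 \<Longrightarrow> wt \<alpha> A B s x \<ge> 0"
  using A_nonneg B_pos by (simp add: wt_def heaviside_def)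

lemma laguerre_weight_set_integrable_atLeastAtMost:
  "set_integrable lborel {0..s} (laguerre_weight k)"
  by (rule set_integrable_subset[OF laguerre_weight_set_integrable]) auto

definition jump_moment :: "nat \<Rightarrow> real \<Rightarrow> real" where
  "jump_moment k s = (LINT x:{0..}|lborel. x ^ k * wt \<alpha> A B s x)"

lemma jump_moment_eq:
  "set_integrable lborel {0..} (\<lambda>x. x ^ k * wt \<alpha> A B s x)"
  "jump_moment k s = (A + B) * Gamma (real k + \<alpha> + 1) - B * integral {0..s} (laguerre_weight k)"
proof -
  have "x ^ k * wt \<alpha> A B s x
      = (A + B) * laguerre_weight k x - B * (indicator {..s} x * laguerre_weight k x)" for x
    by (auto simp: wt_def heaviside_def laguerre_weight_def indicator_def algebra_simps)
  moreover have "(\<lambda>x. indicator {0..} x *\<^sub>R (indicator {..s} x * laguerre_weight k x))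
      = (\<lambda>x. indicator {0..s} x *\<^sub>R laguerre_weight k x)"
    by (auto simp: indicator_def)
  then have "set_integrable lborel {0..} (\<lambda>x. indicator {..s} x * laguerre_weight k x)"
    and "(LINT x:{0..}|lborel. indicator {..s} x * laguerre_weight k x)
      = integral {0..s} (laguerre_weight k)"
    using laguerre_weight_set_integrable_atLeastAtMost
      set_borel_integral_eq_integral(2)[OF laguerre_weight_set_integrable_atLeastAtMost]
    by (simp_all add: set_integrable_def set_lebesgue_integral_def)
  ultimately show "set_integrable lborel {0..} (\<lambda>x. x ^ k * wt \<alpha> A B s x)"
    "jump_moment k s = (A + B) * Gamma (real k + \<alpha> + 1) - B * integral {0..s} (laguerre_weight k)"
    using laguerre_weight_set_integrable[of k]
    by (simp_all add: jump_moment_def set_integral_diff set_integral_laguerre_weight)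
qed

lemma set_integral_poly_wt:
  "set_integrable lborel {0..} (\<lambda>x. poly p x * wt \<alpha> A B s x)"
  "(LINT x:{0..}|lborel. poly p x * wt \<alpha> A B s x) = moment_functional (\<lambda>k. jump_moment k s) p"
proof -
  let ?f = "\<lambda>k x. indicator {0..} x * (x ^ k * wt \<alpha> A B s x)"
  have expand: "(\<lambda>x. indicator {0..} x * (poly p x * wt \<alpha> A B s x))
      = (\<lambda>x. \<Sum>k\<le>degree p. coeff p k * ?f k x)"
    by (simp add: poly_altdef sum_distrib_left sum_distrib_right mult_ac)
  have int: "integrable lborel (?f k)" for k
    using jump_moment_eq(1)[of k s] by (simp add: set_integrable_def)
  show "set_integrable lborel {0..} (\<lambda>x. poly p x * wt \<alpha> A B s x)"
    unfolding set_integrable_def real_scaleR_def expand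
    by (intro Bochner_Integration.integrable_sum integrable_mult_right int)
  show "(LINT x:{0..}|lborel. poly p x * wt \<alpha> A B s x) = moment_functional (\<lambda>k. jump_moment k s) p"
    unfolding set_lebesgue_integral_def real_scaleR_def expand jump_moment_def moment_functional_def
    by (subst Bochner_Integration.integral_sum) (simp_all add: int)
qed

lemma jump_moments_pos_def: "pos_def_moments (\<lambda>k. jump_moment k s)"
proof
  fix p :: "real poly"
  assume "p \<noteq> 0"
  define a where "a = max s 0"
  have "(LINT x:{0..}|lborel. poly (p * p) x * wt \<alpha> A B s x) > 0"
  proof (rule set_integral_pos_on_interval)
    show "set_integrable lborel {0..} (\<lambda>x. poly (p * p) x * wt \<alpha> A B s x)"
      by (rule set_integral_poly_wt(1))
    show "0 \<le> poly (p * p) x * wt \<alpha> A B s x" if "x \<in> {0..}" for x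
      using that wt_nonneg by simp
    show "finite {x. poly p x = 0}"
      using \<open>p \<noteq> 0\<close> by (rule poly_roots_finite)
    show "0 < poly (p * p) x * wt \<alpha> A B s x" if "x \<in> {a<..<a + 1} - {x. poly p x = 0}" for x
      using that A_nonneg B_pos
      by (auto simp: a_def wt_def heaviside_def intro!: mult_pos_pos simp flip: power2_eq_square)
  qed (auto simp: a_def)
  then show "moment_functional (\<lambda>k. jump_moment k s) (p * p) > 0"
    by (simp only: set_integral_poly_wt(2))
qed

lemma OP_eq_orth_poly: "OP \<alpha> A B s n = orth_poly (\<lambda>k. jump_moment k s) n"
proof -
  interpret pos_def_moments "\<lambda>k. jump_moment k s"
    by (rule jump_moments_pos_def)
  have integral_eq: "(LINT x:{0..}|lborel. x ^ k * poly p x * wt \<alpha> A B s x)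
      = moment_functional (\<lambda>k. jump_moment k s) (monom 1 k * p)" for k p
    using set_integral_poly_wt(2)[of "monom 1 k * p" s] by (simp add: poly_monom mult.assoc)
  have orth: "moment_functional (\<lambda>k. jump_moment k s)
      (monom 1 k * orth_poly (\<lambda>k. jump_moment k s) n) = 0" if "k < n" for k
    using that by (intro orth_poly_orthogonal) (simp add: coeff_monom)
  show ?thesis
    unfolding OP_def integral_eq by (intro the_equality) (auto intro: orth_poly_unique simp: orth)
qed

lemma hn_eq: "hn \<alpha> A B s n = moment_functional (\<lambda>k. jump_moment k s)
    (orth_poly (\<lambda>k. jump_moment k s) n * orth_poly (\<lambda>k. jump_moment k s) n)"
  unfolding hn_def OP_eq_orth_poly power2_eq_square poly_mult[symmetric]
  by (rule set_integral_poly_wt(2))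

lemma jump_moment_has_derivative:
  assumes "s > 0"
  shows "((\<lambda>s. jump_moment k s) has_real_derivative - B * laguerre_weight k s) (at s)"
proof -
  have "((\<lambda>s. integral {0..s} (laguerre_weight k)) has_real_derivative laguerre_weight k s)
      (at s within {0..s + 1})"
    using assms
    by (intro integral_has_real_derivative continuous_on_subset[OF laguerre_weight_continuous_on]) auto
  moreover have "at s within {0..s + 1} = at s"
    using assms by (intro at_within_interior) auto
  ultimately show ?thesis
    unfolding jump_moment_eq(2)[abs_def] by (auto intro!: derivative_eq_intros)
qed

lemma integral_laguerre_weight_Suc:
  assumes "s \<ge> 0"
  shows "integral {0..s} (laguerre_weight (Suc k))
    = (real k + \<alpha> + 1) * integral {0..s} (laguerre_weight k) - s * laguerre_weight k s"
proof -
  have "((\<lambda>x. x * laguerre_weight k x) has_real_derivative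
      (real k + \<alpha> + 1) * laguerre_weight k x - laguerre_weight (Suc k) x) (at x)" if "x > 0" for x
  proof -
    have "((\<lambda>x. x ^ Suc k * x powr \<alpha> * exp (- x)) has_real_derivative
        real (Suc k) * x ^ k * x powr \<alpha> * exp (- x)
        + x ^ Suc k * (\<alpha> * x powr (\<alpha> - 1)) * exp (- x) - x ^ Suc k * x powr \<alpha> * exp (- x)) (at x)"
      using that by (auto intro!: derivative_eq_intros simp: algebra_simps simp del: power_Suc)
    moreover have "x powr (\<alpha> - 1) = x powr \<alpha> / x"
      using that by (simp add: powr_diff)
    ultimately show ?thesis
      using that by (simp add: laguerre_weight_def field_simps)
  qed
  moreover have "continuous_on {0..s} (\<lambda>x. x * laguerre_weight k x)"
    by (intro continuous_intros continuous_on_subset[OF laguerre_weight_continuous_on]) auto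
  ultimately have "((\<lambda>x. (real k + \<alpha> + 1) * laguerre_weight k x - laguerre_weight (Suc k) x)
      has_integral s * laguerre_weight k s - 0 * laguerre_weight k 0) {0..s}"
    using assms
    by (intro fundamental_theorem_of_calculus_interior)
      (auto simp: has_real_derivative_iff_has_vector_derivative[symmetric])
  then have "integral {0..s} (\<lambda>x. (real k + \<alpha> + 1) * laguerre_weight k x - laguerre_weight (Suc k) x)
      = s * laguerre_weight k s"
    by (simp add: integral_unique)
  moreover have "laguerre_weight j integrable_on {0..s}" for j
    by (intro integrable_continuous_real continuous_on_subset[OF laguerre_weight_continuous_on]) auto
  then have "integral {0..s} (\<lambda>x. (real k + \<alpha> + 1) * laguerre_weight k x - laguerre_weight (Suc k) x)
      = (real k + \<alpha> + 1) * integral {0..s} (laguerre_weight k)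
        - integral {0..s} (laguerre_weight (Suc k))"
    by (subst integral_diff) (auto intro: integrable_on_mult_right)
  ultimately show ?thesis
    by simp
qed

lemma jump_moment_Suc:
  assumes "s \<ge> 0"
  shows "jump_moment (Suc k) s
    = (real k + (\<alpha> + 1)) * jump_moment k s + B * s powr (\<alpha> + 1) * exp (- s) * s ^ k"
proof -
  have "real k + \<alpha> + 1 \<notin> \<int>\<^sub>\<le>\<^sub>0"
    using alpha_pos by (auto elim!: nonpos_Ints_cases)
  then have "Gamma (real (Suc k) + \<alpha> + 1) = (real k + \<alpha> + 1) * Gamma (real k + \<alpha> + 1)"
    using Gamma_plus1[of "real k + \<alpha> + 1"] by (simp add: add_ac)
  moreover have "s * laguerre_weight k s = s powr (\<alpha> + 1) * exp (- s) * s ^ k"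
    using assms by (cases "s = 0") (auto simp: laguerre_weight_def powr_add)
  ultimately show ?thesis
    using assms by (simp add: jump_moment_eq(2) integral_laguerre_weight_Suc algebra_simps)
qed

lemma hn_pos: "hn \<alpha> A B s n > 0"
  unfolding hn_eq using jump_moments_pos_def
  by (rule pos_def_moments.moment_functional_square_pos) simp

lemma ln_Dn_eq_sum: "ln (Dn \<alpha> A B s n) = (\<Sum>j<n. ln (hn \<alpha> A B s j))"
  unfolding Dn_def using hn_pos by (intro ln_prod) (auto simp: less_imp_neq[symmetric])

lemma ln_hn_has_derivative:
  assumes "t > 0"
  shows "((\<lambda>s. ln (hn \<alpha> A B s j)) has_real_derivative - Rn \<alpha> A B t j) (at t)"
proof -
  have "((\<lambda>s. hn \<alpha> A B s j) has_real_derivative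
      moment_functional (\<lambda>k. (- B * t powr \<alpha> * exp (- t)) * t ^ k)
        (orth_poly (\<lambda>k. jump_moment k t) j * orth_poly (\<lambda>k. jump_moment k t) j)) (at t)"
    unfolding hn_eq using jump_moment_has_derivative[OF assms] jump_moments_pos_def
    by (intro orth_poly_norm_has_derivative) (auto simp: laguerre_weight_def mult_ac)
  then have "((\<lambda>s. hn \<alpha> A B s j) has_real_derivative
      - B * t powr \<alpha> * exp (- t) * poly (OP \<alpha> A B t j) t ^ 2) (at t)"
    unfolding moment_functional_power by (simp add: OP_eq_orth_poly power2_eq_square)
  from DERIV_ln_divide[OF hn_pos] this show ?thesis
    by (rule DERIV_chain2[THEN DERIV_cong]) (simp add: Rn_def)
qed

lemma t_sum_Rn_eq:
  assumes "t > 0" "n \<ge> 1"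
  shows "t * (\<Sum>j<n. Rn \<alpha> A B t j) = - p1 \<alpha> A B t n - real n * (real n + \<alpha>)"
proof -
  let ?m = "\<lambda>k. jump_moment k t"
  let ?P = "orth_poly ?m"
  let ?b = "B * t powr (\<alpha> + 1) * exp (- t)"
  interpret pos_def_moments ?m
    by (rule jump_moments_pos_def)
  obtain n' where n: "n = Suc n'"
    using assms(2) by (cases n) auto
  have "t * Rn \<alpha> A B t j = ?b * (poly (?P j) t ^ 2 / moment_functional ?m (?P j * ?P j))" for j
    using assms by (simp add: Rn_def hn_eq OP_eq_orth_poly powr_add)
  then have "t * (\<Sum>j<n. Rn \<alpha> A B t j)
      = ?b * (\<Sum>j\<le>n'. poly (?P j) t ^ 2 / moment_functional ?m (?P j * ?P j))"
    by (simp add: n sum_distrib_left lessThan_Suc_atMost)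
  also have "\<dots> = - coeff (?P (Suc n')) n' - real (Suc n') * (real n' + (\<alpha> + 1))"
    using assms by (intro orth_poly_kernel_diagonal jump_moment_Suc) auto
  finally show ?thesis
    by (simp add: n p1_def OP_eq_orth_poly algebra_simps)
qed

end

theorem theorem3:
  fixes \<alpha> A B t :: real and n :: nat
  assumes "\<alpha> > 0" and "A \<ge> 0" and "B > 0" and "t > 0" and "n \<ge> 1"
  shows "(\<lambda>s. ln (Dn \<alpha> A B s n)) differentiable (at t)
    \<and> (\<forall>j<n. (\<lambda>s. ln (hn \<alpha> A B s j)) differentiable (at t))
    \<and> - t * deriv (\<lambda>s. ln (Dn \<alpha> A B s n)) t
        = - t * (\<Sum>j<n. deriv (\<lambda>s. ln (hn \<alpha> A B s j)) t)
    \<and> - t * (\<Sum>j<n. deriv (\<lambda>s. ln (hn \<alpha> A B s j)) t)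
        = t * (\<Sum>j<n. Rn \<alpha> A B t j)
    \<and> t * (\<Sum>j<n. Rn \<alpha> A B t j) = - p1 \<alpha> A B t n - real n * (real n + \<alpha>)"
proof -
  interpret laguerre_jump \<alpha> A B
    using assms by unfold_locales auto
  have ln_hn: "((\<lambda>s. ln (hn \<alpha> A B s j)) has_real_derivative - Rn \<alpha> A B t j) (at t)" for j
    using assms(4) by (rule ln_hn_has_derivative)
  have ln_Dn: "((\<lambda>s. ln (Dn \<alpha> A B s n)) has_real_derivative (\<Sum>j<n. - Rn \<alpha> A B t j)) (at t)"
    unfolding ln_Dn_eq_sum by (intro DERIV_sum ln_hn)
  show ?thesis
    unfolding DERIV_imp_deriv[OF ln_Dn] DERIV_imp_deriv[OF ln_hn]
    using ln_Dn ln_hn t_sum_Rn_eq[OF assms(4,5)]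
    by (auto simp: real_differentiable_def sum_negf)
qed

end
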